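(* Let $(Q,\infty)$, $\alpha$, $\beta$, $\bar\zeta$, $\mathcal C$, $0\in I$ be as in the context, let $d\ge1$ be an integer with $d\beta_i\le\alpha_i$ for all $i\in I$, let $\zeta\in\mathcal C$, and let $\zeta^\sharp$ and $U$ be as in the context. Then a representation $\rho_\sharp$ of $Q^\sharp$ on $U$ is $\zeta^\sharp$-stable if and only if it is $\bar\zeta$-semistable and every sub-representation $S\subseteq U$ with $\sum_{i\in I}\bar\zeta_i\dim S_i=0$ and $S_{\infty'}=\mathbb C$ equals $U$.
   Context: A framed quiver is a quiver with relations $Q=(Q_0,Q_1,Q_2)$ (arrows $a$ from $\mathrm{out}(a)$ to $\mathrm{in}(a)$; each relation $l\in Q_2$ a linear combination of paths with common beginning $\mathrm{out}(l)$ and ending $\mathrm{in}(l)$) together with a vertex $\infty\in Q_0$; $I=Q_0\setminus\{\infty\}$ and $\mathrm{out}(l),\mathrm{in}(l)\in I$ for all $l$. Fix $\alpha\in\mathbb Z_{\ge0}^{Q_0}$ with $\alpha_\infty=1$. Walls are the hyperplanes $(\beta')^\perp=\{\zeta\in\mathbb R^I\mid\sum_i\zeta_i\beta'_i=0\}$ for $\beta'\in\mathbb Z_{\ge0}^I\setminus\{0\}$ with $\beta'_i\le\alpha_i$ for all $i$; chambers are the connected components of the complement of the union of walls. Fix such a $\beta$ and $\bar\zeta\in\beta^\perp$ lying on no wall other than $\beta^\perp$; let $\mathcal C$ be the chamber whose closure contains $\bar\zeta$ and on which $\sum_i\zeta_i\beta_i<0$. Fix $0\in I$ with $\beta_0\neq0$.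 The quiver $Q^\sharp$ has vertices $Q_0\sqcup\{\infty'\}$, arrows $Q_1$ plus one new arrow $\infty'\to0$, and relations $Q_2$. Let $U=\bigoplus_{v\in Q_0\sqcup\{\infty'\}}U_v$ with $\dim U_i=d\beta_i$ ($i\in I$), $U_\infty=0$, $U_{\infty'}=\mathbb C$. Define $\zeta^\sharp$ by $\zeta^\sharp_i=\zeta_i$ ($i\in I$), $\zeta^\sharp_\infty=0$, $\zeta^\sharp_{\infty'}=-\sum_{i\in I}\zeta_i d\beta_i$. A representation of $Q^\sharp$ on $U$ is $\zeta^\sharp$-stable if every sub-representation $S$ (graded subspace stable under all arrow maps) with $0\ne S\ne U$ satisfies $\sum_v\zeta^\sharp_v\dim S_v<0$. It is $\bar\zeta$-semistable if every sub-representation $S$ satisfies $\sum_{i\in I}\bar\zeta_i\dim S_i\le0$. *)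

theory Defs
  imports "HOL-Analysis.Analysis" "HOL-Library.Function_Algebras"
begin

text \<open>A vector of \<open>\<complex>^n\<close> is modelled as a function \<open>nat \<Rightarrow> complex\<close> vanishing
  from index \<open>n\<close> on. Scalar multiplication is pointwise.\<close>

definition cscale :: "complex \<Rightarrow> (nat \<Rightarrow> complex) \<Rightarrow> (nat \<Rightarrow> complex)" where
  "cscale c x = (\<lambda>i. c * x i)"

definition cdim :: "(nat \<Rightarrow> complex) set \<Rightarrow> nat" where
  "cdim S = vector_space.dim cscale S"

definition csubspace :: "(nat \<Rightarrow> complex) set \<Rightarrow> bool" where
  "csubspace S = module.subspace cscale S"

text \<open>The graded space \<open>U = \<Oplus>_v U_v\<close> with \<open>dim U_v = n v\<close>.\<close>
definition coord_space :: "('v \<Rightarrow> nat) \<Rightarrow> 'v \<Rightarrow> (nat \<Rightarrow> complex) set" where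
  "coord_space n v = {x. \<forall>i\<ge>n v. x i = 0}"

text \<open>Arrows have source \<open>s a\<close> (= out) and target \<open>t a\<close> (= in). A representation on
  \<open>U\<close> assigns to each arrow a matrix \<open>\<rho> a\<close> (only the entries \<open>j < n (t a)\<close>, \<open>i < n (s a)\<close>
  matter), i.e. a linear map \<open>U_{s a} \<rightarrow> U_{t a}\<close>.\<close>

definition arr_apply ::
  "('e \<Rightarrow> 'v) \<Rightarrow> ('e \<Rightarrow> 'v) \<Rightarrow> ('v \<Rightarrow> nat) \<Rightarrow> ('e \<Rightarrow> nat \<Rightarrow> nat \<Rightarrow> complex) \<Rightarrow> 'e
     \<Rightarrow> (nat \<Rightarrow> complex) \<Rightarrow> (nat \<Rightarrow> complex)" where
  "arr_apply s t n \<rho> a x = (\<lambda>j. if j < n (t a) then (\<Sum>i<n (s a). \<rho> a j i * x i) else 0)"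

fun is_path :: "('e \<Rightarrow> 'v) \<Rightarrow> ('e \<Rightarrow> 'v) \<Rightarrow> 'v \<Rightarrow> 'v \<Rightarrow> 'e list \<Rightarrow> bool" where
  "is_path s t v w [] = (v = w)"
| "is_path s t v w (a # p) = (s a = v \<and> is_path s t (t a) w p)"

fun path_apply ::
  "('e \<Rightarrow> 'v) \<Rightarrow> ('e \<Rightarrow> 'v) \<Rightarrow> ('v \<Rightarrow> nat) \<Rightarrow> ('e \<Rightarrow> nat \<Rightarrow> nat \<Rightarrow> complex) \<Rightarrow> 'e list
     \<Rightarrow> (nat \<Rightarrow> complex) \<Rightarrow> (nat \<Rightarrow> complex)" where
  "path_apply s t n \<rho> [] x = x"
| "path_apply s t n \<rho> (a # p) x = path_apply s t n \<rho> p (arr_apply s t n \<rho> a x)"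

text \<open>A relation is a triple \<open>(out l, in l, terms)\<close> where terms is a list of
  (coefficient, path) pairs; the relation is the linear combination of the paths.\<close>
definition is_rep ::
  "('e \<Rightarrow> 'v) \<Rightarrow> ('e \<Rightarrow> 'v) \<Rightarrow> ('v \<times> 'v \<times> (complex \<times> 'e list) list) set \<Rightarrow> ('v \<Rightarrow> nat)
     \<Rightarrow> ('e \<Rightarrow> nat \<Rightarrow> nat \<Rightarrow> complex) \<Rightarrow> bool" where
  "is_rep s t rels n \<rho> \<longleftrightarrow>
     (\<forall>(v, w, l) \<in> rels. \<forall>x \<in> coord_space n v.
        sum_list (map (\<lambda>(c, p). cscale c (path_apply s t n \<rho> p x)) l) = 0)"

definition is_subrep ::
  "('e \<Rightarrow> 'v) \<Rightarrow> ('e \<Rightarrow> 'v) \<Rightarrow> ('v \<Rightarrow> nat) \<Rightarrow> ('e \<Rightarrow> nat \<Rightarrow> nat \<Rightarrow> complex)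
     \<Rightarrow> ('v \<Rightarrow> (nat \<Rightarrow> complex) set) \<Rightarrow> bool" where
  "is_subrep s t n \<rho> S \<longleftrightarrow>
     (\<forall>v. csubspace (S v) \<and> S v \<subseteq> coord_space n v) \<and>
     (\<forall>a. \<forall>x \<in> S (s a). arr_apply s t n \<rho> a x \<in> S (t a))"

definition stable ::
  "('e \<Rightarrow> 'v::finite) \<Rightarrow> ('e \<Rightarrow> 'v) \<Rightarrow> ('v \<Rightarrow> nat) \<Rightarrow> ('e \<Rightarrow> nat \<Rightarrow> nat \<Rightarrow> complex)
     \<Rightarrow> ('v \<Rightarrow> real) \<Rightarrow> bool" where
  "stable s t n \<rho> \<theta> \<longleftrightarrow>
     (\<forall>S. is_subrep s t n \<rho> S \<longrightarrow> S \<noteq> (\<lambda>_. {0}) \<longrightarrow> S \<noteq> coord_space n \<longrightarrow>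
        (\<Sum>v\<in>UNIV. \<theta> v * real (cdim (S v))) < 0)"

definition semistable ::
  "('e \<Rightarrow> 'v::finite) \<Rightarrow> ('e \<Rightarrow> 'v) \<Rightarrow> ('v \<Rightarrow> nat) \<Rightarrow> ('e \<Rightarrow> nat \<Rightarrow> nat \<Rightarrow> complex)
     \<Rightarrow> ('v \<Rightarrow> real) \<Rightarrow> bool" where
  "semistable s t n \<rho> \<theta> \<longleftrightarrow>
     (\<forall>S. is_subrep s t n \<rho> S \<longrightarrow> (\<Sum>v\<in>UNIV. \<theta> v * real (cdim (S v))) \<le> 0)"

text \<open>\<open>\<real>^I\<close> is modelled as the functions \<open>'v \<Rightarrow> real\<close> vanishing at \<open>\<infinity>\<close>.\<close>
definition RI :: "'v \<Rightarrow> ('v \<Rightarrow> real) set" where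
  "RI vinf = {z. z vinf = 0}"

definition pairing :: "'v \<Rightarrow> ('v \<Rightarrow> real) \<Rightarrow> ('v \<Rightarrow> nat) \<Rightarrow> real" where
  "pairing vinf z b = (\<Sum>i\<in>UNIV - {vinf}. z i * real (b i))"

definition wall_vec :: "'v \<Rightarrow> ('v \<Rightarrow> nat) \<Rightarrow> ('v \<Rightarrow> nat) \<Rightarrow> bool" where
  "wall_vec vinf \<alpha> b \<longleftrightarrow> (\<exists>i. i \<noteq> vinf \<and> b i \<noteq> 0) \<and> (\<forall>i. i \<noteq> vinf \<longrightarrow> b i \<le> \<alpha> i)"

definition wall :: "'v::finite \<Rightarrow> ('v \<Rightarrow> nat) \<Rightarrow> ('v \<Rightarrow> real) set" where
  "wall vinf b = {z \<in> RI vinf. pairing vinf z b = 0}"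

definition wall_complement :: "'v::finite \<Rightarrow> ('v \<Rightarrow> nat) \<Rightarrow> ('v \<Rightarrow> real) set" where
  "wall_complement vinf \<alpha> = RI vinf - \<Union>{wall vinf b | b. wall_vec vinf \<alpha> b}"

definition chambers :: "'v::finite \<Rightarrow> ('v \<Rightarrow> nat) \<Rightarrow> ('v \<Rightarrow> real) set set" where
  "chambers vinf \<alpha> = {connected_component_set (wall_complement vinf \<alpha>) z | z. z \<in> wall_complement vinf \<alpha>}"

section \<open>The quiver \<open>Q^\<sharp>\<close>: vertices \<open>'v option\<close> (None = \<open>\<infinity>'\<close>), arrows \<open>'e option\<close>
  (None = the new arrow \<open>\<infinity>' \<rightarrow> 0\<close>)\<close>

definition src_sharp :: "('e \<Rightarrow> 'v) \<Rightarrow> 'e option \<Rightarrow> 'v option" where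
  "src_sharp s e = (case e of None \<Rightarrow> None | Some a \<Rightarrow> Some (s a))"

definition tgt_sharp :: "('e \<Rightarrow> 'v) \<Rightarrow> 'v \<Rightarrow> 'e option \<Rightarrow> 'v option" where
  "tgt_sharp t v0 e = (case e of None \<Rightarrow> Some v0 | Some a \<Rightarrow> Some (t a))"

definition rels_sharp ::
  "('v \<times> 'v \<times> (complex \<times> 'e list) list) set
     \<Rightarrow> ('v option \<times> 'v option \<times> (complex \<times> 'e option list) list) set" where
  "rels_sharp rels = {(Some v, Some w, map (\<lambda>(c, p). (c, map Some p)) l) | v w l. (v, w, l) \<in> rels}"

definition dims_sharp :: "'v \<Rightarrow> ('v \<Rightarrow> nat) \<Rightarrow> nat \<Rightarrow> 'v option \<Rightarrow> nat" where
  "dims_sharp vinf \<beta> d x = (case x of None \<Rightarrow> 1 | Some i \<Rightarrow> if i = vinf then 0 else d * \<beta> i)"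

definition zeta_sharp :: "'v::finite \<Rightarrow> ('v \<Rightarrow> nat) \<Rightarrow> nat \<Rightarrow> ('v \<Rightarrow> real) \<Rightarrow> 'v option \<Rightarrow> real" where
  "zeta_sharp vinf \<beta> d z x = (case x of
      None \<Rightarrow> - (\<Sum>i\<in>UNIV - {vinf}. z i * real (d * \<beta> i))
    | Some i \<Rightarrow> if i = vinf then 0 else z i)"

definition ext_I :: "'v \<Rightarrow> ('v \<Rightarrow> real) \<Rightarrow> 'v option \<Rightarrow> real" where
  "ext_I vinf z x = (case x of None \<Rightarrow> 0 | Some i \<Rightarrow> if i = vinf then 0 else z i)"

end

theory Submission
  imports Defs
begin

(* For a sub-representation S, let v be its dimension vector on I and e = dim S_inf' (0 or 1);
  its zeta#-weight is <zeta, v> - e <zeta, d beta>. For every wall vector b,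
  <zeta, b> < 0 iff <zbar, b> <= 0: the sign of <-, b> cannot change on the chamber and so passes
  weakly to zbar in its closure, and if <zbar, b> = 0 then genericity of zbar gives
  b^perp = beta^perp, making b a positive multiple of beta on I. Applied to b = v when e = 0 and to b = d beta - v when
  e = 1 (where <zbar, d beta> = 0), this turns the stability inequality for S into the two
  conditions on the right. The equivalence holds one graded subspace at a time. *)

interpretation cvs: vector_space cscale
  by unfold_locales (auto simp: cscale_def fun_eq_iff algebra_simps)

context vector_space
begin

lemma subspace_eq_if_dim_le:
  assumes V: "subspace V" and VW: "V \<subseteq> W" and W: "W \<subseteq> span T" "finite T"
    and dim: "dim W \<le> dim V"
  shows "V = W"
proof -
  obtain B where B: "B \<subseteq> V" "independent B" "V \<subseteq> span B" "card B = dim V"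
    by (rule basis_exists)
  obtain C where C: "C \<subseteq> W" "independent C" "W \<subseteq> span C" "card C = dim W"
    by (rule basis_exists)
  have "finite C"
    using independent_span_bound[OF W(2) C(2)] C(1) W(1) by blast
  have "W \<subseteq> V"
  proof
    fix x assume x: "x \<in> W"
    show "x \<in> V"
    proof (rule ccontr)
      assume "x \<notin> V"
      moreover have "span B \<subseteq> V"
        using B(1) V by (rule span_minimal)
      ultimately have "x \<notin> span B" by blast
      then have "x \<notin> B" "independent (insert x B)"
        using B(2) span_base independent_insertI by blast+
      moreover have "insert x B \<subseteq> span C"
        using x B(1) VW C(3) by blast
      ultimately have "finite (insert x B) \<and> card (insert x B) \<le> card C"
        by (intro independent_span_bound[OF \<open>finite C\<close>])
      with \<open>x \<notin> B\<close> B(4) C(4) dim show False by auto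
    qed
  qed
  with VW show ?thesis by blast
qed

end

definition cunit :: "nat \<Rightarrow> nat \<Rightarrow> complex" where
  "cunit j = (\<lambda>i. if i = j then 1 else 0)"

lemma sum_fun_apply: "(\<Sum>x\<in>A. g x) (i::nat) = (\<Sum>x\<in>A. g x i :: complex)"
  by (induction A rule: infinite_finite_induct) auto

lemma csubspace_coord_space: "csubspace (coord_space n v)"
  unfolding csubspace_def cvs.subspace_def coord_space_def by (auto simp: cscale_def)

lemma coord_space_eq_span: "coord_space n v = cvs.span (cunit ` {..<n v})"
proof
  show "cvs.span (cunit ` {..<n v}) \<subseteq> coord_space n v"
    using csubspace_coord_space[of n v]
    by (intro cvs.span_minimal) (auto simp: cunit_def csubspace_def coord_space_def)
  show "coord_space n v \<subseteq> cvs.span (cunit ` {..<n v})"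
  proof
    fix x assume x: "x \<in> coord_space n v"
    have "x = (\<Sum>j<n v. cscale (x j) (cunit j))"
    proof
      fix i
      have "(\<Sum>j<n v. cscale (x j) (cunit j)) i = (\<Sum>j<n v. if i = j then x j else 0)"
        unfolding sum_fun_apply by (rule sum.cong) (auto simp: cscale_def cunit_def)
      then show "x i = (\<Sum>j<n v. cscale (x j) (cunit j)) i"
        using x by (cases "i < n v") (auto simp: coord_space_def)
    qed
    also have "\<dots> \<in> cvs.span (cunit ` {..<n v})"
      by (intro cvs.span_sum cvs.span_scale cvs.span_base) auto
    finally show "x \<in> cvs.span (cunit ` {..<n v})" .
  qed
qed

lemma inj_cunit: "inj cunit"
  by (auto simp: inj_def cunit_def fun_eq_iff)

lemma independent_cunit: "cvs.independent (cunit ` {..<m})"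
proof (rule cvs.independent_if_scalars_zero)
  fix f x assume s: "(\<Sum>x\<in>cunit ` {..<m}. cscale (f x) x) = 0" and x: "x \<in> cunit ` {..<m}"
  then obtain j where j: "j < m" "x = cunit j" by auto
  have "0 = (\<Sum>x\<in>cunit ` {..<m}. cscale (f x) x) j" using s by simp
  also have "\<dots> = (\<Sum>k<m. f (cunit k) * cunit k j)"
    by (simp add: sum_fun_apply sum.reindex[OF inj_on_subset[OF inj_cunit]] cscale_def)
  also have "\<dots> = (\<Sum>k<m. if j = k then f (cunit k) else 0)"
    by (rule sum.cong) (auto simp: cunit_def)
  also have "\<dots> = f x"
    using j by simp
  finally show "f x = 0" by simp
qed simp

lemma card_cunit: "card (cunit ` {..<m}) = m"
  by (simp add: card_image inj_on_subset[OF inj_cunit])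

lemma cdim_coord_space: "cdim (coord_space n v) = n v"
  unfolding cdim_def coord_space_eq_span
  by (simp add: cvs.dim_eq_card_independent independent_cunit card_cunit)

lemma cdim_le_coord_space: "S \<subseteq> coord_space n v \<Longrightarrow> cdim S \<le> n v"
  unfolding cdim_def coord_space_eq_span
  by (metis card_cunit cvs.dim_le_card finite_imageI finite_lessThan)

lemma csubspace_eq_coord_space_iff:
  assumes "csubspace S" "S \<subseteq> coord_space n v"
  shows "S = coord_space n v \<longleftrightarrow> cdim S = n v"
  using assms cvs.subspace_eq_if_dim_le[of S "coord_space n v" "cunit ` {..<n v}"]
  by (auto simp: csubspace_def cdim_def coord_space_eq_span[symmetric]
      cdim_coord_space[unfolded cdim_def])

lemma cdim_zero: "cdim {0} = 0"
  using cvs.dim_span_eq_card_independent[OF cvs.independent_empty] by (simp add: cdim_def)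

lemma csubspace_eq_zero_iff:
  assumes "csubspace S" "S \<subseteq> coord_space n v"
  shows "S = {0} \<longleftrightarrow> cdim S = 0"
  using assms cvs.subspace_eq_if_dim_le[of "{0}" S "cunit ` {..<n v}"]
  by (auto simp: csubspace_def cdim_def coord_space_eq_span cdim_zero[unfolded cdim_def]
      cvs.subspace_0)

lemma graded_eq_coord_space_iff:
  assumes "\<And>x. csubspace (S x)" "\<And>x. S x \<subseteq> coord_space n x"
  shows "S = coord_space n \<longleftrightarrow> (\<forall>x. cdim (S x) = n x)"
  using csubspace_eq_coord_space_iff[OF assms] by (auto simp: fun_eq_iff)

lemma graded_eq_zero_iff:
  assumes "\<And>x. csubspace (S x)" "\<And>x. S x \<subseteq> coord_space n x"
  shows "S = (\<lambda>_. {0}) \<longleftrightarrow> (\<forall>x. cdim (S x) = 0)"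
  using csubspace_eq_zero_iff[OF assms] by (auto simp: fun_eq_iff)

lemma all_option_iff: "(\<forall>x. P x) \<longleftrightarrow> P None \<and> P (Some a) \<and> (\<forall>i. i \<noteq> a \<longrightarrow> P (Some i))"
  by (metis option.exhaust)

lemma graded_subspace_dims_sharp:
  fixes S :: "'v option \<Rightarrow> (nat \<Rightarrow> complex) set"
  assumes sub: "\<And>x. csubspace (S x)" and le: "\<And>x. S x \<subseteq> coord_space (dims_sharp vinf \<beta> d) x"
  shows "cdim (S None) \<le> 1"
    and "\<And>i. i \<noteq> vinf \<Longrightarrow> cdim (S (Some i)) \<le> d * \<beta> i"
    and "S = (\<lambda>_. {0}) \<longleftrightarrow> cdim (S None) = 0 \<and> (\<forall>i. i \<noteq> vinf \<longrightarrow> cdim (S (Some i)) = 0)"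
    and "S = coord_space (dims_sharp vinf \<beta> d) \<longleftrightarrow>
           cdim (S None) = 1 \<and> (\<forall>i. i \<noteq> vinf \<longrightarrow> cdim (S (Some i)) = d * \<beta> i)"
    and "S None = coord_space (dims_sharp vinf \<beta> d) None \<longleftrightarrow> cdim (S None) = 1"
proof -
  have dim_le: "cdim (S x) \<le> dims_sharp vinf \<beta> d x" for x
    using cdim_le_coord_space[OF le] .
  show "cdim (S None) \<le> 1"
    using dim_le[of None] by (simp add: dims_sharp_def)
  show "cdim (S (Some i)) \<le> d * \<beta> i" if "i \<noteq> vinf" for i
    using dim_le[of "Some i"] that by (simp add: dims_sharp_def)
  have "cdim (S (Some vinf)) = 0"
    using dim_le[of "Some vinf"] by (simp add: dims_sharp_def)
  then show "S = (\<lambda>_. {0}) \<longleftrightarrow> cdim (S None) = 0 \<and> (\<forall>i. i \<noteq> vinf \<longrightarrow> cdim (S (Some i)) = 0)"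
    and "S = coord_space (dims_sharp vinf \<beta> d) \<longleftrightarrow>
           cdim (S None) = 1 \<and> (\<forall>i. i \<noteq> vinf \<longrightarrow> cdim (S (Some i)) = d * \<beta> i)"
    unfolding graded_eq_zero_iff[OF sub le] graded_eq_coord_space_iff[OF sub le]
      all_option_iff[where a = vinf]
    by (auto simp: dims_sharp_def)
  show "S None = coord_space (dims_sharp vinf \<beta> d) None \<longleftrightarrow> cdim (S None) = 1"
    using csubspace_eq_coord_space_iff[OF sub le] by (simp add: dims_sharp_def)
qed

lemma pairing_cong: "(\<And>i. i \<noteq> vinf \<Longrightarrow> b i = c i) \<Longrightarrow> pairing vinf z b = pairing vinf z c"
  unfolding pairing_def by (intro sum.cong) auto

lemma pairing_eq_0_if_zero: "(\<And>i. i \<noteq> vinf \<Longrightarrow> b i = 0) \<Longrightarrow> pairing vinf z b = 0"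
  unfolding pairing_def by (intro sum.neutral) auto

lemma pairing_mult: "pairing vinf z (\<lambda>i. d * b i) = real d * pairing vinf z b"
  unfolding pairing_def by (simp add: sum_distrib_left algebra_simps)

lemma pairing_diff:
  assumes "\<And>i. i \<noteq> vinf \<Longrightarrow> c i \<le> b i"
  shows "pairing vinf z (\<lambda>i. b i - c i) = pairing vinf z b - pairing vinf z c"
  unfolding pairing_def using assms
  by (auto simp: sum_subtractf[symmetric] of_nat_diff algebra_simps intro!: sum.cong)

lemma pairing_linear_left:
  "pairing vinf (\<lambda>i. a * x i - c * y i) b = a * pairing vinf x b - c * pairing vinf y b"
  unfolding pairing_def by (simp add: sum_subtractf sum_distrib_left algebra_simps)

lemma pairing_indicator:
  fixes b :: "'v::finite \<Rightarrow> nat"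
  assumes "i \<noteq> vinf"
  shows "pairing vinf (\<lambda>j. if j = i then 1 else 0) b = real (b i)"
  unfolding pairing_def using assms by (simp add: if_distrib if_distribR sum.delta cong: if_cong)

lemma continuous_on_pairing: "continuous_on UNIV (\<lambda>z. pairing vinf z b)"
  unfolding pairing_def
  by (intro continuous_on_sum continuous_on_mult_right continuous_on_product_coordinates)

lemma sum_drop_vinf:
  fixes vinf :: "'v::finite"
  shows "(\<Sum>i\<in>UNIV. (if i = vinf then 0 else z i) * r i) = (\<Sum>i\<in>UNIV - {vinf}. z i * r i :: real)"
  by (intro sum.mono_neutral_cong_right) auto

lemma sum_ext_I_eq_pairing:
  fixes f :: "'v::finite option \<Rightarrow> nat"
  shows "(\<Sum>x\<in>UNIV. ext_I vinf z x * real (f x)) = pairing vinf z (\<lambda>i. f (Some i))"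
  by (simp add: UNIV_option_conv sum.reindex ext_I_def pairing_def sum_drop_vinf)

lemma sum_zeta_sharp_eq_pairing:
  fixes f :: "'v::finite option \<Rightarrow> nat"
  shows "(\<Sum>x\<in>UNIV. zeta_sharp vinf \<beta> d z x * real (f x)) =
    pairing vinf z (\<lambda>i. f (Some i)) - real (f None) * pairing vinf z (\<lambda>i. d * \<beta> i)"
  by (simp add: UNIV_option_conv sum.reindex zeta_sharp_def pairing_def sum_drop_vinf)

lemma nonpos_on_closure_if_nonvanishing:
  fixes f :: "'a::topological_space \<Rightarrow> real"
  assumes "connected C" "continuous_on UNIV f" "\<forall>z\<in>C. f z \<noteq> 0"
    and "z \<in> C" "f z < 0" "y \<in> closure C"
  shows "f y \<le> 0"
proof -
  have "connected (f ` C)"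
    using assms(1,2) by (intro connected_continuous_image) (auto intro: continuous_on_subset)
  have "C \<subseteq> {z. f z \<le> 0}"
  proof
    fix x assume "x \<in> C"
    show "x \<in> {z. f z \<le> 0}"
    proof (rule ccontr)
      assume "x \<notin> {z. f z \<le> 0}"
      then have "f z \<le> 0" "0 \<le> f x"
        using assms(5) by auto
      then have "0 \<in> f ` C"
        using \<open>connected (f ` C)\<close> \<open>x \<in> C\<close> assms(4) unfolding connected_iff_interval
        by blast
      with assms(3) show False by auto
    qed
  qed
  moreover have "closed {z. f z \<le> 0}"
    using assms(2) by (intro closed_Collect_le) auto
  ultimately have "closure C \<subseteq> {z. f z \<le> 0}"
    by (rule closure_minimal)
  with assms(6) show ?thesis by blast
qed

lemma chamber_subset_wall_complement: "C \<in> chambers vinf \<alpha> \<Longrightarrow> C \<subseteq> wall_complement vinf \<alpha>"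
  unfolding chambers_def by (auto dest: connected_component_in)

lemma connected_chamber: "C \<in> chambers vinf \<alpha> \<Longrightarrow> connected C"
  unfolding chambers_def by auto

lemma pairing_nonzero_in_chamber:
  assumes "C \<in> chambers vinf \<alpha>" "z \<in> C" "wall_vec vinf \<alpha> b"
  shows "pairing vinf z b \<noteq> 0"
  using chamber_subset_wall_complement[OF assms(1)] assms(2,3)
  unfolding wall_complement_def wall_def by blast

lemma chamber_subset_RI: "C \<in> chambers vinf \<alpha> \<Longrightarrow> C \<subseteq> RI vinf"
  using chamber_subset_wall_complement unfolding wall_complement_def by blast

lemma pairing_proportional_if_wall_eq:
  fixes b c :: "'v::finite \<Rightarrow> nat"
  assumes walls: "wall vinf b = wall vinf c" and i: "i \<noteq> vinf" and z: "z \<in> RI vinf"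
  shows "real (c i) * pairing vinf z b = real (b i) * pairing vinf z c"
proof -
  define e :: "'v \<Rightarrow> real" where "e = (\<lambda>j. if j = i then 1 else 0)"
  define y where "y = (\<lambda>j. real (c i) * z j - pairing vinf z c * e j)"
  have "y \<in> wall vinf c"
    using z i by (simp add: wall_def RI_def y_def e_def pairing_linear_left pairing_indicator)
  then have "pairing vinf y b = 0"
    unfolding walls[symmetric] by (simp add: wall_def)
  then show ?thesis
    using i by (simp add: y_def e_def pairing_linear_left pairing_indicator)
qed

lemma chamber_pairing_neg_iff:
  assumes C: "C \<in> chambers vinf \<alpha>" "\<zeta> \<in> C" "zbar \<in> closure C"
    and \<beta>: "wall_vec vinf \<alpha> \<beta>" "zbar \<in> wall vinf \<beta>" "pairing vinf \<zeta> \<beta> < 0"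
    and generic: "\<forall>b. wall_vec vinf \<alpha> b \<longrightarrow> zbar \<in> wall vinf b \<longrightarrow> wall vinf b = wall vinf \<beta>"
    and b: "wall_vec vinf \<alpha> b"
  shows "pairing vinf \<zeta> b < 0 \<longleftrightarrow> pairing vinf zbar b \<le> 0"
proof (cases "pairing vinf zbar b = 0")
  case True
  then have walls: "wall vinf b = wall vinf \<beta>"
    using generic b \<beta>(2) by (auto simp: wall_def)
  obtain i where i: "i \<noteq> vinf" "\<beta> i \<noteq> 0"
    using \<beta>(1) by (auto simp: wall_vec_def)
  have "\<zeta> \<in> RI vinf"
    using chamber_subset_RI C(1,2) by blast
  then have "real (\<beta> i) * pairing vinf \<zeta> b = real (b i) * pairing vinf \<zeta> \<beta>"
    by (rule pairing_proportional_if_wall_eq[OF walls i(1)])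
  moreover have "real (b i) * pairing vinf \<zeta> \<beta> \<le> 0"
    using \<beta>(3) by (simp add: mult_nonneg_nonpos)
  ultimately have "real (\<beta> i) * pairing vinf \<zeta> b \<le> 0"
    by simp
  then have "pairing vinf \<zeta> b \<le> 0"
    using i(2) by (simp add: mult_le_0_iff)
  with pairing_nonzero_in_chamber[OF C(1,2) b] True show ?thesis by simp
next
  case False
  have nz: "\<forall>z\<in>C. pairing vinf z b \<noteq> 0"
    using pairing_nonzero_in_chamber[OF C(1) _ b] by blast
  note sign = nonpos_on_closure_if_nonvanishing[OF connected_chamber[OF C(1)] _ _ C(2) _ C(3)]
  have neg: "pairing vinf \<zeta> b < 0 \<Longrightarrow> pairing vinf zbar b \<le> 0"
    using sign[OF continuous_on_pairing nz] .
  have pos: "pairing vinf \<zeta> b > 0 \<Longrightarrow> - pairing vinf zbar b \<le> 0"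
    using sign[OF continuous_on_minus[OF continuous_on_pairing]] nz by auto
  consider "pairing vinf \<zeta> b < 0" | "pairing vinf \<zeta> b > 0"
    using nz C(2) by (meson linorder_neqE_linordered_idom)
  then show ?thesis
  proof cases
    case 1
    with neg show ?thesis by simp
  next
    case 2
    with pos False show ?thesis by simp
  qed
qed

lemma nonzero_imp_pairing_neg_iff:
  assumes sign: "\<And>b. wall_vec vinf \<alpha> b \<Longrightarrow> pairing vinf \<zeta> b < 0 \<longleftrightarrow> pairing vinf zbar b \<le> 0"
    and v: "\<And>i. i \<noteq> vinf \<Longrightarrow> v i \<le> \<alpha> i"
  shows "((\<exists>i. i \<noteq> vinf \<and> v i \<noteq> 0) \<longrightarrow> pairing vinf \<zeta> v < 0) \<longleftrightarrow> pairing vinf zbar v \<le> 0"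
proof (cases "\<exists>i. i \<noteq> vinf \<and> v i \<noteq> 0")
  case True
  with v have "wall_vec vinf \<alpha> v"
    by (auto simp: wall_vec_def)
  with True sign show ?thesis by blast
next
  case False
  then have "pairing vinf zbar v = 0"
    by (intro pairing_eq_0_if_zero) blast
  with False show ?thesis by auto
qed

lemma ne_imp_pairing_diff_neg_iff:
  assumes nonzero: "\<And>b. wall_vec vinf \<alpha> b \<Longrightarrow> pairing vinf \<zeta> b \<noteq> 0"
    and sign: "\<And>b. wall_vec vinf \<alpha> b \<Longrightarrow> pairing vinf \<zeta> b < 0 \<longleftrightarrow> pairing vinf zbar b \<le> 0"
    and vu: "\<And>i. i \<noteq> vinf \<Longrightarrow> v i \<le> u i" and u: "\<And>i. i \<noteq> vinf \<Longrightarrow> u i \<le> \<alpha> i"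
    and zbar_u: "pairing vinf zbar u = 0"
  shows "((\<exists>i. i \<noteq> vinf \<and> v i \<noteq> u i) \<longrightarrow> pairing vinf \<zeta> v - pairing vinf \<zeta> u < 0) \<longleftrightarrow>
    pairing vinf zbar v \<le> 0 \<and> (pairing vinf zbar v = 0 \<longrightarrow> (\<forall>i. i \<noteq> vinf \<longrightarrow> v i = u i))"
proof (cases "\<exists>i. i \<noteq> vinf \<and> v i \<noteq> u i")
  case True
  let ?w = "\<lambda>i. u i - v i"
  have w: "pairing vinf z ?w = pairing vinf z u - pairing vinf z v" for z
    using vu by (rule pairing_diff)
  from True vu u have "wall_vec vinf \<alpha> ?w"
    unfolding wall_vec_def by (metis diff_is_0_eq diff_le_self le_antisym le_trans)
  then have "pairing vinf \<zeta> ?w \<noteq> 0" "pairing vinf \<zeta> ?w < 0 \<longleftrightarrow> pairing vinf zbar ?w \<le> 0"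
    by (rule nonzero, rule sign)
  with True show ?thesis
    unfolding w zbar_u by auto
next
  case False
  then have "pairing vinf zbar v = pairing vinf zbar u"
    by (intro pairing_cong) auto
  with False zbar_u show ?thesis by auto
qed

lemma zeta_sharp_weight_neg_iff:
  fixes S :: "'v::finite option \<Rightarrow> (nat \<Rightarrow> complex) set"
  assumes nonzero: "\<And>b. wall_vec vinf \<alpha> b \<Longrightarrow> pairing vinf \<zeta> b \<noteq> 0"
    and sign: "\<And>b. wall_vec vinf \<alpha> b \<Longrightarrow> pairing vinf \<zeta> b < 0 \<longleftrightarrow> pairing vinf zbar b \<le> 0"
    and zbar_\<beta>: "pairing vinf zbar \<beta> = 0" and d\<beta>: "\<And>i. i \<noteq> vinf \<Longrightarrow> d * \<beta> i \<le> \<alpha> i"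
    and S: "is_subrep s t (dims_sharp vinf \<beta> d) \<rho> S"
  shows "(S \<noteq> (\<lambda>_. {0}) \<longrightarrow> S \<noteq> coord_space (dims_sharp vinf \<beta> d) \<longrightarrow>
            (\<Sum>x\<in>UNIV. zeta_sharp vinf \<beta> d \<zeta> x * real (cdim (S x))) < 0) \<longleftrightarrow>
         (\<Sum>x\<in>UNIV. ext_I vinf zbar x * real (cdim (S x))) \<le> 0 \<and>
         ((\<Sum>x\<in>UNIV. ext_I vinf zbar x * real (cdim (S x))) = 0 \<longrightarrow>
            S None = coord_space (dims_sharp vinf \<beta> d) None \<longrightarrow> S = coord_space (dims_sharp vinf \<beta> d))"
proof -
  let ?v = "\<lambda>i. cdim (S (Some i))" and ?u = "\<lambda>i. d * \<beta> i"
  have "\<And>x. csubspace (S x)" "\<And>x. S x \<subseteq> coord_space (dims_sharp vinf \<beta> d) x"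
    using S by (auto simp: is_subrep_def)
  note dims = graded_subspace_dims_sharp[OF this]
  have v_le: "\<And>i. i \<noteq> vinf \<Longrightarrow> ?v i \<le> \<alpha> i"
    using dims(2) d\<beta> le_trans by blast
  have zbar_u: "pairing vinf zbar ?u = 0"
    by (simp add: pairing_mult zbar_\<beta>)
  consider "cdim (S None) = 0" | "cdim (S None) = 1"
    using dims(1) by linarith
  then show ?thesis
  proof cases
    case 1
    then show ?thesis
      unfolding sum_zeta_sharp_eq_pairing sum_ext_I_eq_pairing dims(3-5)
      using nonzero_imp_pairing_neg_iff[OF sign v_le] by auto
  next
    case 2
    then show ?thesis
      unfolding sum_zeta_sharp_eq_pairing sum_ext_I_eq_pairing dims(3-5)
      using ne_imp_pairing_diff_neg_iff[OF nonzero sign dims(2) d\<beta> zbar_u] by auto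
  qed
qed

theorem lemma4p1:
  fixes src tgt :: "'e::finite \<Rightarrow> 'v::finite"
    and rels :: "('v \<times> 'v \<times> (complex \<times> 'e list) list) set"
    and vinf v0 :: 'v
    and \<alpha> \<beta> :: "'v \<Rightarrow> nat"
    and zbar \<zeta> :: "'v \<Rightarrow> real"
    and d :: nat
    and \<rho> :: "'e option \<Rightarrow> nat \<Rightarrow> nat \<Rightarrow> complex"
  assumes framed: "\<forall>(v, w, l) \<in> rels. v \<noteq> vinf \<and> w \<noteq> vinf \<and>
                      (\<forall>(c, p) \<in> set l. is_path src tgt v w p)"
    and alpha_inf: "\<alpha> vinf = 1"
    and beta: "wall_vec vinf \<alpha> \<beta>"
    and zbar_wall: "zbar \<in> wall vinf \<beta>"
    and zbar_gen: "\<forall>b. wall_vec vinf \<alpha> b \<longrightarrow> zbar \<in> wall vinf b \<longrightarrow> wall vinf b = wall vinf \<beta>"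
    and v0: "v0 \<noteq> vinf" "\<beta> v0 \<noteq> 0"
    and d: "d \<ge> 1" "\<forall>i. i \<noteq> vinf \<longrightarrow> d * \<beta> i \<le> \<alpha> i"
    and chamber: "\<exists>C \<in> chambers vinf \<alpha>. \<zeta> \<in> C \<and> zbar \<in> closure C \<and> pairing vinf \<zeta> \<beta> < 0"
    and rep: "is_rep (src_sharp src) (tgt_sharp tgt v0) (rels_sharp rels) (dims_sharp vinf \<beta> d) \<rho>"
  shows "stable (src_sharp src) (tgt_sharp tgt v0) (dims_sharp vinf \<beta> d) \<rho> (zeta_sharp vinf \<beta> d \<zeta>)
     \<longleftrightarrow> semistable (src_sharp src) (tgt_sharp tgt v0) (dims_sharp vinf \<beta> d) \<rho> (ext_I vinf zbar)
         \<and> (\<forall>S. is_subrep (src_sharp src) (tgt_sharp tgt v0) (dims_sharp vinf \<beta> d) \<rho> S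
               \<longrightarrow> (\<Sum>x\<in>UNIV. ext_I vinf zbar x * real (cdim (S x))) = 0
               \<longrightarrow> S None = coord_space (dims_sharp vinf \<beta> d) None
               \<longrightarrow> S = coord_space (dims_sharp vinf \<beta> d))"
proof -
  obtain C where C: "C \<in> chambers vinf \<alpha>" "\<zeta> \<in> C" "zbar \<in> closure C" "pairing vinf \<zeta> \<beta> < 0"
    using chamber by blast
  have sign: "pairing vinf \<zeta> b < 0 \<longleftrightarrow> pairing vinf zbar b \<le> 0" if "wall_vec vinf \<alpha> b" for b
    using chamber_pairing_neg_iff[OF C(1-3) beta zbar_wall C(4) zbar_gen that] .
  have zbar_\<beta>: "pairing vinf zbar \<beta> = 0"
    using zbar_wall by (simp add: wall_def)
  note weight_iff =
    zeta_sharp_weight_neg_iff[OF pairing_nonzero_in_chamber[OF C(1,2)] sign zbar_\<beta> d(2)[rule_format]]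
  show ?thesis
    unfolding stable_def semistable_def
    by (simp add: weight_iff imp_conjR all_conj_distrib cong: imp_cong)
qed

end
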